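(* Let $n\ge2$ and $x,y\in[0,1[$. Then: (1) $\rho_x$ and $\rho_y$ are unitarily equivalent representations of $V_n$ if and only if $\mathrm{orb}(x)=\mathrm{orb}(y)$; (2) $\rho_x$ is an irreducible representation of $V_n$ on $H_x$.
   Context: $f(y)=ny\bmod1$ on $[0,1[$; $\mathrm{orb}(x)=\{y\in[0,1[:\ f^p(y)=f^q(x)\text{ for some }p,q\in\mathbb{N}\}$; $H_x=\ell^2(\mathrm{orb}(x))$ with orthonormal basis $\{\delta_y\}$; $S_i\delta_y=\delta_{(y+i-1)/n}$ ($1\le i\le n$); $\pi_x:\mathcal{O}_n\to B(H_x)$ is the representation of the Cuntz algebra ($\sum_j s_js_j^*=1$, $s_i^*s_j=\delta_{ij}1$) with $\pi_x(s_i)=S_i$. For a word $u=u_1\cdots u_r$ over $\{1,\dots,n\}$, $\phi(u)=\big[\sum_i\frac{u_i-1}{n^i},\sum_i\frac{u_i-1}{n^i}+n^{-r}\big[$ and $s_u=s_{u_1}\cdots s_{u_r}$. $V_n$ is the group of bijections $g$ of $[0,1[$ for which there are admissible languages (finite sets of words such that every infinite word has exactly one of them as prefix) $\{a_1,\dots,a_r\}$, $\{b_1,\dots,b_r\}$ with $g$ mapping $\phi(b_i)$ onto $\phi(a_i)$ by the increasing affine map; $\Psi_n(g)=\sum_i s_{a_i}s_{b_i}^*$, and $\rho_x=\pi_x\circ\Psi_n$, a unitary representation of $V_n$ on $H_x$. Two representations $\rho_1,\rho_2$ of a group $G$ on $H_1,H_2$ are unitarily equivalent if there is a unitary $U:H_1\to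 H_2$ with $U\rho_1(g)=\rho_2(g)U$ for all $g$; irreducible means the commutant of $\rho(G)$ is $\mathbb{C}1$. *)

theory Defs
  imports "HOL-Analysis.Analysis"
begin

definition fmap :: "nat \<Rightarrow> real \<Rightarrow> real" where
  "fmap n y = frac (real n * y)"

definition orb :: "nat \<Rightarrow> real \<Rightarrow> real set" where
  "orb n x = {y \<in> {0..<1}. \<exists>p q. (fmap n ^^ p) y = (fmap n ^^ q) x}"

section \<open>The Hilbert space H_x = l2(orb x), as functions supported on orb x\<close>

definition Hsp :: "nat \<Rightarrow> real \<Rightarrow> (real \<Rightarrow> complex) set" where
  "Hsp n x = {h. (\<forall>y. y \<notin> orb n x \<longrightarrow> h y = 0) \<and>
                 (\<lambda>y. (cmod (h y))\<^sup>2) summable_on orb n x}"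

definition ip :: "real set \<Rightarrow> (real \<Rightarrow> complex) \<Rightarrow> (real \<Rightarrow> complex) \<Rightarrow> complex" where
  "ip A h k = infsum (\<lambda>y. h y * cnj (k y)) A"

section \<open>The Cuntz isometries S_i (S_i delta_y = delta_((y+i-1)/n)) and their adjoints\<close>

definition Sop :: "nat \<Rightarrow> nat \<Rightarrow> (real \<Rightarrow> complex) \<Rightarrow> (real \<Rightarrow> complex)" where
  "Sop n i h = (\<lambda>z. if (real i - 1) / real n \<le> z \<and> z < real i / real n
                     then h (real n * z - (real i - 1)) else 0)"

text \<open>Adjoint of S_i: S_i^* delta_y = delta_(ny-(i-1)) if y in phi(i), else 0.\<close>
definition Sadj :: "nat \<Rightarrow> nat \<Rightarrow> (real \<Rightarrow> complex) \<Rightarrow> (real \<Rightarrow> complex)" where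
  "Sadj n i h = (\<lambda>w. if 0 \<le> w \<and> w < 1 then h ((w + real i - 1) / real n) else 0)"

definition sword :: "nat \<Rightarrow> nat list \<Rightarrow> (real \<Rightarrow> complex) \<Rightarrow> (real \<Rightarrow> complex)" where
  "sword n u = foldr (\<lambda>i T. Sop n i \<circ> T) u id"

definition sword_adj :: "nat \<Rightarrow> nat list \<Rightarrow> (real \<Rightarrow> complex) \<Rightarrow> (real \<Rightarrow> complex)" where
  "sword_adj n u = foldr (\<lambda>i T. T \<circ> Sadj n i) u id"

definition word_left :: "nat \<Rightarrow> nat list \<Rightarrow> real" where
  "word_left n u = (\<Sum>i<length u. (real (u ! i) - 1) / real n ^ (i + 1))"

definition phi :: "nat \<Rightarrow> nat list \<Rightarrow> real set" where
  "phi n u = {word_left n u ..< word_left n u + 1 / real n ^ length u}"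

definition is_word :: "nat \<Rightarrow> nat list \<Rightarrow> bool" where
  "is_word n u \<longleftrightarrow> set u \<subseteq> {1..n}"

definition admissible :: "nat \<Rightarrow> nat list set \<Rightarrow> bool" where
  "admissible n L \<longleftrightarrow> finite L \<and> (\<forall>u\<in>L. is_word n u) \<and>
     (\<forall>w::nat \<Rightarrow> nat. (\<forall>k. w k \<in> {1..n}) \<longrightarrow>
        (\<exists>!u. u \<in> L \<and> u = map w [0..<length u]))"

text \<open>A witness for g: pairs (a_i, b_i) with {a_i}, {b_i} admissible (listed without
repetition) and g mapping phi(b_i) onto phi(a_i) by the increasing affine map.\<close>
definition Vwitness :: "nat \<Rightarrow> (real \<Rightarrow> real) \<Rightarrow> (nat list \<times> nat list) list \<Rightarrow> bool" where
  "Vwitness n g ps \<longleftrightarrow>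
     distinct (map fst ps) \<and> distinct (map snd ps) \<and>
     admissible n (set (map fst ps)) \<and> admissible n (set (map snd ps)) \<and>
     (\<forall>(a, b)\<in>set ps. \<forall>y\<in>phi n b.
        g y = word_left n a + (y - word_left n b) * real n ^ length b / real n ^ length a)"

definition Vn :: "nat \<Rightarrow> (real \<Rightarrow> real) set" where
  "Vn n = {g. bij_betw g {0..<1} {0..<1} \<and> (\<exists>ps. Vwitness n g ps)}"

text \<open>Psi_n(g) = sum_i s_(a_i) s_(b_i)^*, represented via pi_x; the choice of the
witness is irrelevant (well-definedness of Psi_n).\<close>
definition Psi_op :: "nat \<Rightarrow> (nat list \<times> nat list) list \<Rightarrow> (real \<Rightarrow> complex) \<Rightarrow> (real \<Rightarrow> complex)" where
  "Psi_op n ps h = (\<lambda>z. sum_list (map (\<lambda>(a, b). sword n a (sword_adj n b h) z) ps))"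

definition rho :: "nat \<Rightarrow> (real \<Rightarrow> real) \<Rightarrow> (real \<Rightarrow> complex) \<Rightarrow> (real \<Rightarrow> complex)" where
  "rho n g = Psi_op n (SOME ps. Vwitness n g ps)"

definition lin_on :: "(real \<Rightarrow> complex) set \<Rightarrow> ((real \<Rightarrow> complex) \<Rightarrow> (real \<Rightarrow> complex)) \<Rightarrow> bool" where
  "lin_on H T \<longleftrightarrow> (\<forall>h\<in>H. \<forall>k\<in>H. T (\<lambda>z. h z + k z) = (\<lambda>z. T h z + T k z)) \<and>
                  (\<forall>c. \<forall>h\<in>H. T (\<lambda>z. c * h z) = (\<lambda>z. c * T h z))"

definition unitary_between :: "nat \<Rightarrow> real \<Rightarrow> real \<Rightarrow> ((real \<Rightarrow> complex) \<Rightarrow> (real \<Rightarrow> complex)) \<Rightarrow> bool" where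
  "unitary_between n x y U \<longleftrightarrow> U ` Hsp n x = Hsp n y \<and> lin_on (Hsp n x) U \<and>
     (\<forall>h\<in>Hsp n x. \<forall>k\<in>Hsp n x. ip (orb n y) (U h) (U k) = ip (orb n x) h k)"

definition unitarily_equivalent :: "nat \<Rightarrow> real \<Rightarrow> real \<Rightarrow> bool" where
  "unitarily_equivalent n x y \<longleftrightarrow>
     (\<exists>U. unitary_between n x y U \<and>
          (\<forall>g\<in>Vn n. \<forall>h\<in>Hsp n x. U (rho n g h) = rho n g (U h)))"

definition bounded_op :: "nat \<Rightarrow> real \<Rightarrow> ((real \<Rightarrow> complex) \<Rightarrow> (real \<Rightarrow> complex)) \<Rightarrow> bool" where
  "bounded_op n x T \<longleftrightarrow> T ` Hsp n x \<subseteq> Hsp n x \<and> lin_on (Hsp n x) T \<and>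
     (\<exists>C. \<forall>h\<in>Hsp n x. cmod (ip (orb n x) (T h) (T h)) \<le> C * cmod (ip (orb n x) h h))"

definition irreducible_rho :: "nat \<Rightarrow> real \<Rightarrow> bool" where
  "irreducible_rho n x \<longleftrightarrow>
     (\<forall>T. bounded_op n x T \<and> (\<forall>g\<in>Vn n. \<forall>h\<in>Hsp n x. T (rho n g h) = rho n g (T h))
        \<longrightarrow> (\<exists>c. \<forall>h\<in>Hsp n x. T h = (\<lambda>z. c * h z)))"

end

theory Submission
  imports Defs
begin

text \<open>Every \<open>g \<in> V\<^sub>n\<close> maps \<open>[0,1[\<close> piecewise affinely with slopes \<open>n\<^sup>k\<close>, and \<open>\<rho>\<^sub>x(g)\<close> is the
permutation \<open>\<delta>\<^sub>y \<mapsto> \<delta>\<^bsub>g y\<^esub>\<close> of the basis of \<open>\<ell>\<^sup>2(orb x)\<close>; in particular \<open>g\<close> preserves orbits.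
Conversely \<open>V\<^sub>n\<close> is rich enough to move \<open>x\<close> to any point of its orbit, and the stabiliser of
\<open>x\<close> moves any other point \<open>z\<close> to infinitely many places (swap two cylinders of a fine
level that separate \<open>x\<close> from \<open>z\<close>). A vector fixed by the stabiliser of \<open>x\<close> is therefore
constant on infinite sets off \<open>x\<close>, hence square-summable only if it is a multiple of \<open>\<delta>\<^sub>x\<close>.
Applied to \<open>U \<delta>\<^sub>x\<close> for an intertwiner \<open>U\<close>, this forces \<open>x \<in> orb y\<close>; applied to \<open>T \<delta>\<^sub>x\<close> for a
commuting operator \<open>T\<close>, it gives \<open>T \<delta>\<^sub>x = c \<delta>\<^sub>x\<close>, then \<open>T \<delta>\<^sub>w = c \<delta>\<^sub>w\<close> along the orbit by
transitivity, and \<open>T = c\<close> by boundedness.\<close>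

section \<open>Cylinders and digit expansions\<close>

lemma word_left_Nil [simp]: "word_left n [] = 0"
  by (simp add: word_left_def)

lemma word_left_Cons: "word_left n (i # u) = (real i - 1) / real n + word_left n u / real n"
proof -
  have "word_left n (i # u) = (\<Sum>j<Suc (length u). (real ((i # u) ! j) - 1) / real n ^ (j + 1))"
    by (simp add: word_left_def)
  also have "\<dots> = (real i - 1) / real n + (\<Sum>j<length u. (real (u ! j) - 1) / real n ^ (j + 2))"
    by (subst sum.lessThan_Suc_shift) simp
  also have "(\<Sum>j<length u. (real (u ! j) - 1) / real n ^ (j + 2)) = word_left n u / real n"
    unfolding word_left_def sum_divide_distrib by (intro sum.cong) (auto simp: field_simps)
  finally show ?thesis .
qed

lemma mem_phi_Cons: "n > 0 \<Longrightarrow> z \<in> phi n (i # u) \<longleftrightarrow> real n * z - (real i - 1) \<in> phi n u"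
  by (simp add: phi_def word_left_Cons field_simps)

lemma word_left_in_phi: "n > 0 \<Longrightarrow> word_left n u \<in> phi n u"
  by (simp add: phi_def)

lemma is_word_Cons [simp]: "is_word n (i # u) \<longleftrightarrow> i \<in> {1..n} \<and> is_word n u"
  by (auto simp: is_word_def)

lemma word_left_bounds:
  assumes "n > 0" "is_word n u"
  shows "0 \<le> word_left n u \<and> word_left n u + 1 / real n ^ length u \<le> 1"
  using assms(2)
proof (induction u)
  case Nil then show ?case by simp
next
  case (Cons i u)
  then have i: "1 \<le> i" "i \<le> n"
    and IH: "0 \<le> word_left n u" "word_left n u + 1 / real n ^ length u \<le> 1"
    by auto
  have "word_left n (i # u) + 1 / real n ^ length (i # u)
       = ((real i - 1) + (word_left n u + 1 / real n ^ length u)) / real n"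
    using assms(1) by (simp add: word_left_Cons field_simps)
  also have "\<dots> \<le> 1"
    using IH i assms(1) by (simp add: divide_le_eq_1)
  finally show ?case
    using i IH by (simp add: word_left_Cons)
qed

lemma phi_subset_unit:
  assumes "n > 0" "is_word n u"
  shows "phi n u \<subseteq> {0..<1}"
  using word_left_bounds[OF assms] by (auto simp: phi_def)

lemma fmap_on_phi_Cons:
  assumes "n > 0" "is_word n (i # u)" "z \<in> phi n (i # u)"
  shows "fmap n z = real n * z - (real i - 1)" and "\<lfloor>real n * z\<rfloor> = int i - 1"
proof -
  have "is_word n u" using assms(2) by simp
  then have "real n * z - (real i - 1) \<in> {0..<1}"
    using assms(3) phi_subset_unit[OF assms(1)] mem_phi_Cons[OF assms(1)] by blast
  then show fl: "\<lfloor>real n * z\<rfloor> = int i - 1"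
    by (auto simp: floor_eq_iff)
  then show "fmap n z = real n * z - (real i - 1)"
    using assms(2) by (simp add: fmap_def frac_def)
qed

lemma funpow_fmap_on_phi:
  assumes "n > 0" "is_word n u" "y \<in> phi n u"
  shows "(fmap n ^^ length u) y = real n ^ length u * (y - word_left n u)"
  using assms(2,3)
proof (induction u arbitrary: y)
  case Nil then show ?case by simp
next
  case (Cons i u)
  have "(fmap n ^^ length (i # u)) y = (fmap n ^^ length u) (fmap n y)"
    by (simp add: funpow_Suc_right del: funpow.simps)
  also have "\<dots> = real n ^ length u * (real n * y - (real i - 1) - word_left n u)"
    using Cons.IH[of "fmap n y"] Cons.prems mem_phi_Cons[OF assms(1)]
      fmap_on_phi_Cons(1)[OF assms(1) Cons.prems] by simp
  also have "\<dots> = real n ^ length (i # u) * (y - word_left n (i # u))"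
    using assms(1) by (simp add: word_left_Cons field_simps)
  finally show ?case .
qed

definition digit :: "nat \<Rightarrow> real \<Rightarrow> nat" where
  "digit n y = nat \<lfloor>real n * y\<rfloor> + 1"

definition digits :: "nat \<Rightarrow> real \<Rightarrow> nat \<Rightarrow> nat" where
  "digits n y k = digit n ((fmap n ^^ k) y)"

definition digit_word :: "nat \<Rightarrow> real \<Rightarrow> nat \<Rightarrow> nat list" where
  "digit_word n y m = map (digits n y) [0..<m]"

lemma fmap_range: "fmap n y \<in> {0..<1}"
  by (simp add: fmap_def frac_lt_1)

lemma funpow_fmap_range: "y \<in> {0..<1} \<Longrightarrow> (fmap n ^^ k) y \<in> {0..<1}"
  using fmap_range[of n] by (cases k) auto

lemma digit_range:
  assumes "n > 0" "y \<in> {0..<1}"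
  shows "digit n y \<in> {1..n}"
proof -
  have "0 \<le> real n * y" "real n * y < real n" using assms by auto
  then have "0 \<le> \<lfloor>real n * y\<rfloor>" "\<lfloor>real n * y\<rfloor> < int n"
    by (auto simp: floor_less_iff)
  then show ?thesis by (auto simp: digit_def) linarith
qed

lemma digits_range: "n > 0 \<Longrightarrow> y \<in> {0..<1} \<Longrightarrow> digits n y k \<in> {1..n}"
  unfolding digits_def by (intro digit_range funpow_fmap_range)

lemma digit_word_Suc: "digit_word n y (Suc m) = digit n y # digit_word n (fmap n y) m"
  by (simp add: digit_word_def digits_def map_upt_Suc funpow_Suc_right del: funpow.simps upt_Suc)

lemma is_word_digit_word: "n > 0 \<Longrightarrow> y \<in> {0..<1} \<Longrightarrow> is_word n (digit_word n y m)"
  using digits_range by (auto simp: is_word_def digit_word_def)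

lemma mem_phi_iff_digit_word:
  assumes "n > 0" "is_word n u" "y \<in> {0..<1}"
  shows "y \<in> phi n u \<longleftrightarrow> u = digit_word n y (length u)"
  using assms(2,3)
proof (induction u arbitrary: y)
  case Nil then show ?case by (simp add: phi_def digit_word_def)
next
  case (Cons i u)
  have i: "1 \<le> i" "is_word n u" using Cons.prems by auto
  have "y \<in> phi n (i # u) \<longleftrightarrow> i = digit n y \<and> fmap n y \<in> phi n u"
  proof
    assume y: "y \<in> phi n (i # u)"
    note f = fmap_on_phi_Cons[OF assms(1) Cons.prems(1) y]
    have "i = digit n y" using f(2) i by (simp add: digit_def)
    then show "i = digit n y \<and> fmap n y \<in> phi n u"
      using f(1) y mem_phi_Cons[OF assms(1)] by simp
  next
    assume h: "i = digit n y \<and> fmap n y \<in> phi n u"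
    have "0 \<le> real n * y" using Cons.prems by auto
    then have "fmap n y = real n * y - (real i - 1)"
      using h by (simp add: fmap_def frac_def digit_def)
    then show "y \<in> phi n (i # u)" using h mem_phi_Cons[OF assms(1)] by simp
  qed
  then show ?case
    using Cons.IH[OF i(2) fmap_range] by (simp add: digit_word_Suc)
qed

lemma mem_phi_digit_word: "n > 0 \<Longrightarrow> y \<in> {0..<1} \<Longrightarrow> y \<in> phi n (digit_word n y m)"
  using mem_phi_iff_digit_word[OF _ is_word_digit_word] by (simp add: digit_word_def)

lemma admissible_is_word: "admissible n L \<Longrightarrow> u \<in> L \<Longrightarrow> is_word n u"
  by (auto simp: admissible_def)

lemma admissible_finite: "admissible n L \<Longrightarrow> finite L"
  by (simp add: admissible_def)

lemma admissible_ex1_phi: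
  assumes "n > 0" "admissible n L" "y \<in> {0..<1}"
  shows "\<exists>!u. u \<in> L \<and> y \<in> phi n u"
proof -
  have "\<exists>!u. u \<in> L \<and> u = map (digits n y) [0..<length u]"
    using assms(2) digits_range[OF assms(1,3)] unfolding admissible_def by blast
  moreover have "y \<in> phi n u \<longleftrightarrow> u = map (digits n y) [0..<length u]" if "u \<in> L" for u
    using mem_phi_iff_digit_word[OF assms(1) admissible_is_word[OF assms(2) that] assms(3)]
    by (simp add: digit_word_def)
  ultimately show ?thesis by metis
qed

lemma admissible_phi_disjoint:
  assumes "n > 0" "admissible n L" "u \<in> L" "v \<in> L" "y \<in> phi n u" "y \<in> phi n v"
  shows "u = v"
proof -
  have "y \<in> {0..<1}"
    using phi_subset_unit[OF assms(1) admissible_is_word[OF assms(2,3)]] assms(5) by blast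
  then show ?thesis using admissible_ex1_phi[OF assms(1,2)] assms(3-6) by blast
qed

lemma sword_Cons: "sword n (i # a) = Sop n i \<circ> sword n a"
  by (simp add: sword_def)

lemma sword_adj_Cons: "sword_adj n (i # b) = sword_adj n b \<circ> Sadj n i"
  by (simp add: sword_adj_def)

lemma sword_adj_apply:
  assumes "n > 0" "is_word n b" "\<And>w. w \<notin> {0..<1} \<Longrightarrow> h w = 0"
  shows "sword_adj n b h w =
    (if w \<in> {0..<1} then h (word_left n b + w / real n ^ length b) else 0)"
  using assms(2,3)
proof (induction b arbitrary: h w)
  case Nil then show ?case by (auto simp: sword_adj_def)
next
  case (Cons i b)
  have i: "is_word n b" using Cons.prems by simp
  have IH: "sword_adj n (i # b) h w =
      (if w \<in> {0..<1} then Sadj n i h (word_left n b + w / real n ^ length b) else 0)"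
    unfolding sword_adj_Cons comp_apply by (rule Cons.IH[OF i]) (auto simp: Sadj_def)
  show ?case
  proof (cases "w \<in> {0..<1}")
    case True
    have "0 \<le> w / real n ^ length b" "w / real n ^ length b < 1 / real n ^ length b"
      using True assms(1) by (simp_all add: divide_strict_right_mono)
    then have "word_left n b + w / real n ^ length b \<in> {0..<1}"
      using word_left_bounds[OF assms(1) i] by auto
    then have "sword_adj n (i # b) h w = h ((word_left n b + w / real n ^ length b + real i - 1) / real n)"
      using IH True by (simp add: Sadj_def)
    also have "(word_left n b + w / real n ^ length b + real i - 1) / real n
        = word_left n (i # b) + w / real n ^ length (i # b)"
      using assms(1) by (simp add: word_left_Cons field_simps)
    finally show ?thesis using True by simp
  qed (use IH in auto)
qed

lemma sword_apply:
  assumes "n > 0" "is_word n a" "\<And>w. w \<notin> {0..<1} \<Longrightarrow> k w = 0"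
  shows "sword n a k z =
    (if z \<in> phi n a then k (real n ^ length a * (z - word_left n a)) else 0)"
  using assms(2)
proof (induction a arbitrary: z)
  case Nil
  then show ?case using assms(3) by (auto simp: sword_def phi_def)
next
  case (Cons i a)
  have i: "is_word n a" using Cons.prems by simp
  have mem: "z \<in> phi n (i # a) \<longleftrightarrow>
      ((real i - 1) / real n \<le> z \<and> z < real i / real n) \<and> real n * z - (real i - 1) \<in> phi n a"
    using phi_subset_unit[OF assms(1) i] mem_phi_Cons[OF assms(1)] assms(1)
    by (auto simp: field_simps)
  have rescale: "real n ^ length a * (real n * z - (real i - 1) - word_left n a)
      = real n ^ length (i # a) * (z - word_left n (i # a))"
    using assms(1) by (simp add: word_left_Cons field_simps)
  have "sword n (i # a) k z = (if (real i - 1) / real n \<le> z \<and> z < real i / real n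
      then sword n a k (real n * z - (real i - 1)) else 0)"
    by (simp add: sword_Cons Sop_def)
  then show ?case
    using mem Cons.IH[OF i, of "real n * z - (real i - 1)"] unfolding rescale by auto
qed

definition affine_onto :: "nat \<Rightarrow> nat list \<Rightarrow> nat list \<Rightarrow> real \<Rightarrow> real" where
  "affine_onto n a b y = word_left n a + (y - word_left n b) * real n ^ length b / real n ^ length a"

lemma affine_onto_inverse:
  "n > 0 \<Longrightarrow> affine_onto n a b (affine_onto n b a z) = z"
  by (simp add: affine_onto_def field_simps)

lemma affine_onto_phi:
  assumes "n > 0" "y \<in> phi n b"
  shows "affine_onto n a b y \<in> phi n a"
proof -
  have p: "0 < real n ^ length b" "0 < real n ^ length a" using assms(1) by auto
  have "(y - word_left n b) * real n ^ length b < 1"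
    using assms(2) p by (simp add: phi_def field_simps)
  then show ?thesis
    using assms(2) p by (simp add: phi_def affine_onto_def divide_strict_right_mono)
qed

lemma sword_sword_adj_apply:
  assumes "n > 0" "is_word n a" "is_word n b" "\<And>w. w \<notin> {0..<1} \<Longrightarrow> h w = 0"
  shows "sword n a (sword_adj n b h) z = (if z \<in> phi n a then h (affine_onto n b a z) else 0)"
proof -
  have supp: "\<And>w. w \<notin> {0..<1} \<Longrightarrow> sword_adj n b h w = 0"
    using sword_adj_apply[OF assms(1,3,4)] by auto
  show ?thesis
  proof (cases "z \<in> phi n a")
    case True
    define w where "w = real n ^ length a * (z - word_left n a)"
    have "w \<in> {0..<1}"
      using True assms(1) by (auto simp: phi_def field_simps w_def)
    then have "sword_adj n b h w = h (affine_onto n b a z)"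
      using sword_adj_apply[OF assms(1,3,4), where w=w] by (simp add: affine_onto_def w_def mult.commute)
    then show ?thesis
      using True sword_apply[OF assms(1,2) supp, where z=z] by (simp add: w_def)
  qed (use sword_apply[OF assms(1,2) supp, where z=z] in simp)
qed

section \<open>Elements of \<open>V\<^sub>n\<close> and their action on \<open>H\<^sub>x\<close>\<close>

lemma sum_list_map_eq_single:
  assumes "distinct xs" "x \<in> set xs" "\<And>y. y \<in> set xs \<Longrightarrow> y \<noteq> x \<Longrightarrow> F y = 0"
  shows "sum_list (map F xs) = (F x :: 'b::comm_monoid_add)"
proof -
  have "sum_list (map F xs) = sum F (set xs)"
    using assms(1) by (simp add: sum_list_distinct_conv_sum_set)
  also have "\<dots> = F x"
    using assms(2,3) by (intro sum.remove[THEN trans] sum.neutral[THEN arg_cong]) auto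
  finally show ?thesis by simp
qed

definition pairing_map :: "nat \<Rightarrow> (nat list \<times> nat list) list \<Rightarrow> real \<Rightarrow> real" where
  "pairing_map n ps y = sum_list (map (\<lambda>(a, b). if y \<in> phi n b then affine_onto n a b y else 0) ps)"

locale word_pairing =
  fixes n :: nat and ps :: "(nat list \<times> nat list) list"
  assumes n_pos: "n > 0"
    and distinct_fst: "distinct (map fst ps)" and distinct_snd: "distinct (map snd ps)"
    and admissible_fst: "admissible n (set (map fst ps))"
    and admissible_snd: "admissible n (set (map snd ps))"
begin

lemma distinct_pairs: "distinct ps"
  using distinct_fst distinct_map by blast

lemma is_word_pair: "(a, b) \<in> set ps \<Longrightarrow> is_word n a \<and> is_word n b"
  using admissible_is_word[OF admissible_fst] admissible_is_word[OF admissible_snd] by force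

lemma pair_eq_if_phi_fst:
  assumes "(a, b) \<in> set ps" "(a', b') \<in> set ps" "z \<in> phi n a" "z \<in> phi n a'"
  shows "(a', b') = (a, b)"
proof -
  have "a \<in> set (map fst ps)" "a' \<in> set (map fst ps)" using assms(1,2) by force+
  then have "a' = a" using admissible_phi_disjoint[OF n_pos admissible_fst] assms(3,4) by blast
  then show ?thesis using assms(1,2) distinct_fst by (metis eq_key_imp_eq_value)
qed

lemma pair_eq_if_phi_snd:
  assumes "(a, b) \<in> set ps" "(a', b') \<in> set ps" "y \<in> phi n b" "y \<in> phi n b'"
  shows "(a', b') = (a, b)"
proof -
  have "b \<in> set (map snd ps)" "b' \<in> set (map snd ps)" using assms(1,2) by force+
  then have "b' = b" using admissible_phi_disjoint[OF n_pos admissible_snd] assms(3,4) by blast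
  moreover have "inj_on snd (set ps)" using distinct_snd by (simp add: distinct_map)
  ultimately show ?thesis using assms(1,2) by (metis inj_on_eq_iff snd_conv)
qed

lemma ex_pair_phi_fst: "z \<in> {0..<1} \<Longrightarrow> \<exists>a b. (a, b) \<in> set ps \<and> z \<in> phi n a"
  using admissible_ex1_phi[OF n_pos admissible_fst] by force

lemma ex_pair_phi_snd: "y \<in> {0..<1} \<Longrightarrow> \<exists>a b. (a, b) \<in> set ps \<and> y \<in> phi n b"
  using admissible_ex1_phi[OF n_pos admissible_snd] by force

lemma pairing_map_on_phi:
  assumes ab: "(a, b) \<in> set ps" and y: "y \<in> phi n b"
  shows "pairing_map n ps y = affine_onto n a b y"
proof -
  define F where "F = (\<lambda>(a, b). if y \<in> phi n b then affine_onto n a b y else 0)"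
  have "F p = 0" if "p \<in> set ps" "p \<noteq> (a, b)" for p
    by (cases p) (use that pair_eq_if_phi_snd[OF ab _ y] in \<open>auto simp: F_def\<close>)
  then have "pairing_map n ps y = F (a, b)"
    unfolding pairing_map_def F_def[symmetric] by (rule sum_list_map_eq_single[OF distinct_pairs ab])
  then show ?thesis using y by (simp add: F_def)
qed

lemma pairing_map_inj: "inj_on (pairing_map n ps) {0..<1}"
proof (rule inj_onI)
  fix y1 y2 assume y: "y1 \<in> {0..<1}" "y2 \<in> {0..<1}" "pairing_map n ps y1 = pairing_map n ps y2"
  obtain a1 b1 where p1: "(a1, b1) \<in> set ps" "y1 \<in> phi n b1" using ex_pair_phi_snd y(1) by blast
  obtain a2 b2 where p2: "(a2, b2) \<in> set ps" "y2 \<in> phi n b2" using ex_pair_phi_snd y(2) by blast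
  have eq: "affine_onto n a1 b1 y1 = affine_onto n a2 b2 y2"
    using y(3) pairing_map_on_phi[OF p1] pairing_map_on_phi[OF p2] by simp
  have "affine_onto n a1 b1 y1 \<in> phi n a1" "affine_onto n a1 b1 y1 \<in> phi n a2"
    using affine_onto_phi[OF n_pos p1(2), of a1] affine_onto_phi[OF n_pos p2(2), of a2] eq
    by simp_all
  then have "(a2, b2) = (a1, b1)"
    by (rule pair_eq_if_phi_fst[OF p1(1) p2(1)])
  then have "affine_onto n a1 b1 y1 = affine_onto n a1 b1 y2" using eq by simp
  then show "y1 = y2"
    using affine_onto_inverse[OF n_pos, of b1 a1] by metis
qed

lemma pairing_map_image: "pairing_map n ps ` {0..<1} = {0..<1}"
proof (intro equalityI subsetI)
  fix z assume "z \<in> pairing_map n ps ` {0..<1}"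
  then obtain y where y: "y \<in> {0..<1}" "z = pairing_map n ps y" by blast
  obtain a b where p: "(a, b) \<in> set ps" "y \<in> phi n b" using ex_pair_phi_snd y(1) by blast
  have "z \<in> phi n a" using y(2) pairing_map_on_phi[OF p] affine_onto_phi[OF n_pos p(2)] by simp
  then show "z \<in> {0..<1}" using phi_subset_unit[OF n_pos] is_word_pair[OF p(1)] by blast
next
  fix z :: real assume "z \<in> {0..<1}"
  then obtain a b where p: "(a, b) \<in> set ps" "z \<in> phi n a" using ex_pair_phi_fst by blast
  have y: "affine_onto n b a z \<in> phi n b" using affine_onto_phi[OF n_pos p(2)] .
  have "pairing_map n ps (affine_onto n b a z) = z"
    using pairing_map_on_phi[OF p(1) y] affine_onto_inverse[OF n_pos] by simp
  moreover have "affine_onto n b a z \<in> {0..<1}"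
    using y phi_subset_unit[OF n_pos] is_word_pair[OF p(1)] by blast
  ultimately show "z \<in> pairing_map n ps ` {0..<1}" by (metis image_eqI)
qed

lemma pairing_map_in_Vn: "pairing_map n ps \<in> Vn n"
proof -
  have "Vwitness n (pairing_map n ps) ps"
    unfolding Vwitness_def
    using distinct_fst distinct_snd admissible_fst admissible_snd pairing_map_on_phi
    by (auto simp: affine_onto_def)
  then show ?thesis
    using pairing_map_inj pairing_map_image by (auto simp: Vn_def bij_betw_def)
qed

end

lemma Vwitness_word_pairing: "n > 0 \<Longrightarrow> Vwitness n g ps \<Longrightarrow> word_pairing n ps"
  by (simp add: Vwitness_def word_pairing_def)

lemma Vwitness_apply:
  "Vwitness n g ps \<Longrightarrow> (a, b) \<in> set ps \<Longrightarrow> y \<in> phi n b \<Longrightarrow> g y = affine_onto n a b y"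
  unfolding Vwitness_def affine_onto_def by fast

lemma Vn_bij: "g \<in> Vn n \<Longrightarrow> bij_betw g {0..<1} {0..<1}"
  by (simp add: Vn_def)

lemma Vn_range: "g \<in> Vn n \<Longrightarrow> y \<in> {0..<1} \<Longrightarrow> g y \<in> {0..<1}"
  by (auto simp: Vn_def bij_betw_def)

lemma Vwitness_inv_into:
  assumes "n > 0" "Vwitness n g ps" "bij_betw g {0..<1} {0..<1}" "(a, b) \<in> set ps" "z \<in> phi n a"
  shows "inv_into {0..<1} g z = affine_onto n b a z"
proof -
  have y: "affine_onto n b a z \<in> phi n b"
    using affine_onto_phi[OF assms(1,5)] .
  then have "g (affine_onto n b a z) = z"
    using Vwitness_apply[OF assms(2,4)] affine_onto_inverse[OF assms(1)] by simp
  moreover have "affine_onto n b a z \<in> {0..<1}"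
    using y phi_subset_unit[OF assms(1)]
      word_pairing.is_word_pair[OF Vwitness_word_pairing[OF assms(1,2)] assms(4)] by blast
  ultimately show ?thesis
    using assms(3) by (metis bij_betw_imp_inj_on inv_into_f_f)
qed

text \<open>\<open>\<Psi>\<^sub>n(g) = \<Sum>\<^sub>i s\<^bsub>a\<^sub>i\<^esub> s\<^bsub>b\<^sub>i\<^esub>\<^sup>*\<close> acts by \<open>h \<mapsto> h \<circ> g\<^sup>-\<^sup>1\<close>: on \<open>\<phi>(a\<^sub>i)\<close> only the \<open>i\<close>-th term survives.\<close>
lemma Psi_op_eq_comp_inv:
  assumes "n > 0" "Vwitness n g ps" "bij_betw g {0..<1} {0..<1}"
    and "\<And>w. w \<notin> {0..<1} \<Longrightarrow> h w = 0"
  shows "Psi_op n ps h z = (if z \<in> {0..<1} then h (inv_into {0..<1} g z) else 0)"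
proof -
  interpret word_pairing n ps using Vwitness_word_pairing[OF assms(1,2)] .
  define F where "F = (\<lambda>(a, b). sword n a (sword_adj n b h) z)"
  have F: "F (a, b) = (if z \<in> phi n a then h (affine_onto n b a z) else 0)"
    if "(a, b) \<in> set ps" for a b
    using sword_sword_adj_apply[OF assms(1) _ _ assms(4)] is_word_pair[OF that]
    by (simp add: F_def)
  have Psi: "Psi_op n ps h z = sum_list (map F ps)"
    by (simp add: Psi_op_def F_def)
  show ?thesis
  proof (cases "z \<in> {0..<1}")
    case False
    have "F p = 0" if "p \<in> set ps" for p
    proof (cases p)
      case (Pair a b)
      then have "z \<notin> phi n a"
        using that False phi_subset_unit[OF n_pos] is_word_pair by blast
      then show ?thesis using F that Pair by simp
    qed
    then have "sum_list (map F ps) = sum_list (map (\<lambda>_. 0) ps)"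
      by (intro arg_cong[where f = sum_list] map_cong) auto
    then show ?thesis using Psi False by auto
  next
    case True
    then obtain a b where ab: "(a, b) \<in> set ps" "z \<in> phi n a"
      using ex_pair_phi_fst by blast
    have "F p = 0" if "p \<in> set ps" "p \<noteq> (a, b)" for p
    proof (cases p)
      case (Pair a' b')
      then have "z \<notin> phi n a'"
        using that pair_eq_if_phi_fst[OF ab(1), of a' b' z] ab(2) by blast
      then show ?thesis using F that Pair by simp
    qed
    then have "Psi_op n ps h z = F (a, b)"
      unfolding Psi by (rule sum_list_map_eq_single[OF distinct_pairs ab(1)])
    then show ?thesis
      using F[OF ab(1)] ab(2) True Vwitness_inv_into[OF assms(1-3) ab] by simp
  qed
qed

lemma rho_apply:
  assumes "n > 0" "g \<in> Vn n" "\<And>w. w \<notin> {0..<1} \<Longrightarrow> h w = 0"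
  shows "rho n g h = (\<lambda>z. if z \<in> {0..<1} then h (inv_into {0..<1} g z) else 0)"
proof -
  have "\<exists>ps. Vwitness n g ps" using assms(2) by (simp add: Vn_def)
  then have "Vwitness n g (SOME ps. Vwitness n g ps)" by (rule someI_ex)
  from Psi_op_eq_comp_inv[OF assms(1) this Vn_bij[OF assms(2)], where h=h] assms(3)
  show ?thesis
    unfolding rho_def by blast
qed

section \<open>Orbits, transitivity and stabilisers\<close>

definition same_orbit :: "nat \<Rightarrow> real \<Rightarrow> real \<Rightarrow> bool" where
  "same_orbit n y z \<longleftrightarrow> (\<exists>p q. (fmap n ^^ p) y = (fmap n ^^ q) z)"

lemma same_orbit_refl: "same_orbit n y y"
  by (auto simp: same_orbit_def)

lemma same_orbit_sym: "same_orbit n y z \<Longrightarrow> same_orbit n z y"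
  unfolding same_orbit_def by metis

lemma same_orbit_trans:
  assumes "same_orbit n y z" "same_orbit n z w"
  shows "same_orbit n y w"
proof -
  obtain p q where 1: "(fmap n ^^ p) y = (fmap n ^^ q) z" using assms(1) by (auto simp: same_orbit_def)
  obtain r s where 2: "(fmap n ^^ r) z = (fmap n ^^ s) w" using assms(2) by (auto simp: same_orbit_def)
  have "(fmap n ^^ (r + p)) y = (fmap n ^^ (q + r)) z"
    by (simp add: funpow_add 1 add.commute[of q r])
  also have "\<dots> = (fmap n ^^ (q + s)) w" by (simp add: funpow_add 2)
  finally show ?thesis by (auto simp: same_orbit_def)
qed

lemma orb_eq_same_orbit: "orb n x = {y \<in> {0..<1}. same_orbit n y x}"
  by (simp add: orb_def same_orbit_def)

lemma self_in_orb: "x \<in> {0..<1} \<Longrightarrow> x \<in> orb n x"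
  by (simp add: orb_eq_same_orbit same_orbit_refl)

lemma orb_subset_unit: "orb n x \<subseteq> {0..<1}"
  by (auto simp: orb_eq_same_orbit)

lemma orb_eq_iff_mem: "x \<in> {0..<1} \<Longrightarrow> orb n x = orb n y \<longleftrightarrow> x \<in> orb n y"
  unfolding orb_eq_same_orbit using same_orbit_refl same_orbit_sym same_orbit_trans by blast

text \<open>\<open>g\<close> and \<open>f\<close> are intertwined on each cylinder: \<open>f\<^bsup>|a|\<^esup> (g y) = f\<^bsup>|b|\<^esup> y\<close> for \<open>y \<in> \<phi>(b)\<close>.\<close>
lemma Vn_same_orbit:
  assumes "n > 0" "g \<in> Vn n" "y \<in> {0..<1}"
  shows "same_orbit n (g y) y"
proof -
  obtain ps where w: "Vwitness n g ps" using assms(2) by (auto simp: Vn_def)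
  then have "admissible n (set (map snd ps))" by (simp add: Vwitness_def)
  then obtain b where "b \<in> set (map snd ps)" "y \<in> phi n b"
    using admissible_ex1_phi[OF assms(1) _ assms(3)] by blast
  then obtain a where ab: "(a, b) \<in> set ps" and y: "y \<in> phi n b" by auto
  have words: "is_word n a" "is_word n b" using word_pairing.is_word_pair[OF Vwitness_word_pairing[OF assms(1) w] ab] by auto
  have gy: "g y = affine_onto n a b y" using Vwitness_apply[OF w ab y] .
  then have "g y \<in> phi n a" using affine_onto_phi[OF assms(1) y] by simp
  then have "(fmap n ^^ length a) (g y) = real n ^ length a * (g y - word_left n a)"
    using funpow_fmap_on_phi[OF assms(1) words(1)] by blast
  also have "\<dots> = real n ^ length b * (y - word_left n b)"
    using assms(1) by (simp add: gy affine_onto_def field_simps)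
  also have "\<dots> = (fmap n ^^ length b) y"
    using funpow_fmap_on_phi[OF assms(1) words(2) y] by simp
  finally show ?thesis by (auto simp: same_orbit_def)
qed

lemma Vn_mem_orb_iff:
  assumes "n > 0" "g \<in> Vn n" "y \<in> {0..<1}"
  shows "g y \<in> orb n x \<longleftrightarrow> y \<in> orb n x"
  using Vn_same_orbit[OF assms] Vn_range[OF assms(2,3)] assms(3) same_orbit_sym same_orbit_trans
  unfolding orb_eq_same_orbit by blast

definition level :: "nat \<Rightarrow> nat \<Rightarrow> nat list set" where
  "level n m = {u. length u = m \<and> is_word n u}"

lemma level_eq_lists: "level n m = {xs. set xs \<subseteq> {1..n} \<and> length xs = m}"
  by (auto simp: level_def is_word_def)

lemma finite_level: "finite (level n m)"
  unfolding level_eq_lists by (rule finite_lists_length_eq) simp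

lemma card_level: "card (level n m) = n ^ m"
  unfolding level_eq_lists by (subst card_lists_length_eq) simp_all

lemma admissible_level: "admissible n (level n m)"
  unfolding admissible_def
proof (intro conjI allI impI ballI finite_level)
  show "is_word n u" if "u \<in> level n m" for u
    using that by (simp add: level_def)
  fix w :: "nat \<Rightarrow> nat" assume "\<forall>k. w k \<in> {1..n}"
  then have "map w [0..<m] \<in> level n m" by (auto simp: level_def is_word_def)
  then show "\<exists>!u. u \<in> level n m \<and> u = map w [0..<length u]"
    by (intro ex1I[of _ "map w [0..<m]"]) (auto simp: level_def)
qed

lemma digit_word_in_level: "n > 0 \<Longrightarrow> y \<in> {0..<1} \<Longrightarrow> digit_word n y m \<in> level n m"
  using is_word_digit_word by (simp add: level_def digit_word_def)

lemma ex_other_in_level: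
  assumes "n \<ge> 2" "m \<ge> 1" "u \<in> level n m"
  shows "\<exists>v\<in>level n m. v \<noteq> u"
proof -
  have "n ^ 1 \<le> n ^ m" using assms by (intro power_increasing) auto
  then have "card (level n m) \<ge> 2" using assms(1) by (simp add: card_level)
  then show ?thesis
    by (metis One_nat_def card_le_Suc0_iff_eq finite_level not_less_eq_eq numeral_2_eq_2)
qed

lemma word_left_inj_on_level:
  assumes "n > 0" "u \<in> level n m" "v \<in> level n m" "word_left n u = word_left n v"
  shows "u = v"
  using admissible_phi_disjoint[OF assms(1) admissible_level assms(2,3) word_left_in_phi[OF assms(1)]]
    assms(4) word_left_in_phi[OF assms(1), of v] by simp

lemma admissible_no_extension:
  assumes "n > 0" "admissible n L" "c \<in> L" "i \<in> {1..n}"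
  shows "c @ [i] \<notin> L"
proof
  assume ci: "c @ [i] \<in> L"
  define w where "w k = (if k < length c then c ! k else if k = length c then i else 1)" for k
  have "c ! k \<in> {1..n}" if "k < length c" for k
    using admissible_is_word[OF assms(2,3)] that nth_mem unfolding is_word_def by blast
  then have "\<forall>k. w k \<in> {1..n}" using assms(1,4) by (simp add: w_def)
  then have "\<exists>!u. u \<in> L \<and> u = map w [0..<length u]" using assms(2) by (simp add: admissible_def)
  moreover have "c = map w [0..<length c]" by (rule nth_equalityI) (simp_all add: w_def)
  moreover from this have "c @ [i] = map w [0..<length (c @ [i])]" by (simp add: w_def)
  ultimately show False using assms(3) ci by (metis append_self_conv not_Cons_self2)
qed

definition refine :: "nat \<Rightarrow> nat list set \<Rightarrow> nat list \<Rightarrow> nat list set" where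
  "refine n L c = (L - {c}) \<union> (\<lambda>i. c @ [i]) ` {1..n}"

lemma prefix_snoc_iff:
  "(c @ [i] = map w [0..<length (c @ [i])]) \<longleftrightarrow> c = map w [0..<length c] \<and> i = w (length c)"
  by auto

lemma ex1_prefix_refine:
  assumes ex1: "\<exists>!u. u \<in> L \<and> u = map w [0..<length u]" and "c \<in> L" "w (length c) \<in> {1..n}"
  shows "\<exists>!u. u \<in> refine n L c \<and> u = map w [0..<length u]"
proof -
  obtain u0 where u0: "u0 \<in> L" "u0 = map w [0..<length u0]"
    and uniq: "\<And>v. v \<in> L \<Longrightarrow> v = map w [0..<length v] \<Longrightarrow> v = u0"
    using ex1 by metis
  have new: "c = u0 \<and> v = c @ [w (length c)]"
    if v: "v \<in> refine n L c" "v \<notin> L - {c}" "v = map w [0..<length v]" for v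
  proof -
    obtain i where "v = c @ [i]" using v(1,2) by (auto simp: refine_def)
    then have "c = map w [0..<length c]" "v = c @ [w (length c)]"
      using v(3) prefix_snoc_iff by metis+
    then show ?thesis using uniq[OF assms(2)] by blast
  qed
  show ?thesis
  proof (cases "u0 = c")
    case False
    show ?thesis
    proof (rule ex1I[of _ u0])
      show "u0 \<in> refine n L c \<and> u0 = map w [0..<length u0]"
        using u0 False by (simp add: refine_def)
      show "v = u0" if "v \<in> refine n L c \<and> v = map w [0..<length v]" for v
        using that uniq new False by blast
    qed
  next
    case True
    show ?thesis
    proof (rule ex1I[of _ "c @ [w (length c)]"])
      show "c @ [w (length c)] \<in> refine n L c \<and>
          c @ [w (length c)] = map w [0..<length (c @ [w (length c)])]"
        using u0 True assms(3) by (simp add: refine_def)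
      show "v = c @ [w (length c)]" if "v \<in> refine n L c \<and> v = map w [0..<length v]" for v
        using that uniq new True by blast
    qed
  qed
qed

lemma admissible_refine:
  assumes "admissible n L" "c \<in> L"
  shows "admissible n (refine n L c)"
  unfolding admissible_def
proof (intro conjI allI impI ballI)
  show "finite (refine n L c)" using admissible_finite[OF assms(1)] by (simp add: refine_def)
  show "is_word n u" if "u \<in> refine n L c" for u
    using that admissible_is_word[OF assms(1)] admissible_is_word[OF assms(1,2)]
    by (auto simp: refine_def is_word_def)
  show "\<exists>!u. u \<in> refine n L c \<and> u = map w [0..<length u]" if w: "\<forall>k. w k \<in> {1..n}" for w
  proof (rule ex1_prefix_refine[OF _ assms(2)])
    show "\<exists>!u. u \<in> L \<and> u = map w [0..<length u]"
      using assms(1) w unfolding admissible_def by blast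
  qed (use w in blast)
qed

lemma card_refine:
  assumes "n > 0" "admissible n L" "c \<in> L"
  shows "card (refine n L c) = card L + (n - 1)"
proof -
  have fin: "finite L" using admissible_finite[OF assms(2)] .
  have "(L - {c}) \<inter> (\<lambda>i. c @ [i]) ` {1..n} = {}"
    using admissible_no_extension[OF assms] by blast
  moreover have "card ((\<lambda>i. c @ [i]) ` {1..n}) = n"
    by (subst card_image) (auto simp: inj_on_def)
  ultimately have "card (refine n L c) = card (L - {c}) + n"
    using fin by (simp add: refine_def card_Un_disjoint)
  then show ?thesis using fin assms(1,3) card_gt_0_iff[of L] by force
qed

text \<open>Splitting a word \<open>c \<noteq> b\<close> into its \<open>n\<close> one-letter extensions raises the size of an
admissible language by \<open>n - 1\<close> and keeps \<open>b\<close>.\<close>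
lemma admissible_grow:
  assumes "n > 0" "admissible n L" "b \<in> L" "c \<in> L" "c \<noteq> b"
  shows "\<exists>L'. admissible n L' \<and> b \<in> L' \<and> card L' = card L + k * (n - 1) \<and> (\<exists>c'\<in>L'. c' \<noteq> b)"
proof (induction k)
  case 0 then show ?case using assms by auto
next
  case (Suc k)
  then obtain L' c' where L': "admissible n L'" "b \<in> L'" "card L' = card L + k * (n - 1)"
    "c' \<in> L'" "c' \<noteq> b"
    by blast
  have "c' @ [1] \<in> refine n L' c'" "c' @ [1] \<noteq> b"
    using assms(1) admissible_no_extension[OF assms(1) L'(1,4), of 1] L'(2)
    by (auto simp: refine_def)
  then show ?case
    using admissible_refine[OF L'(1,4)] card_refine[OF assms(1) L'(1,4)] L'
    by (intro exI[of _ "refine n L' c'"]) (auto simp: refine_def)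
qed

lemma power_add_eq_mult_pred: "(n::nat) > 0 \<Longrightarrow> \<exists>k. n ^ (p + d) = n ^ p + k * (n - 1)"
proof (induction d)
  case 0 show ?case by simp
next
  case (Suc d)
  then obtain k where "n ^ (p + d) = n ^ p + k * (n - 1)" by blast
  moreover have "n ^ (p + Suc d) = n ^ (p + d) + (n - 1) * n ^ (p + d)"
    using Suc.prems by (simp add: algebra_simps)
  ultimately have "n ^ (p + Suc d) = n ^ p + (k + n ^ (p + d)) * (n - 1)"
    by (simp add: algebra_simps)
  then show ?case by blast
qed

lemma ex_admissible_card_power:
  assumes "n \<ge> 2" "1 \<le> p" "p \<le> q" "b \<in> level n p"
  shows "\<exists>L. admissible n L \<and> b \<in> L \<and> card L = n ^ q"
proof -
  obtain k where k: "n ^ (p + (q - p)) = n ^ p + k * (n - 1)"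
    using power_add_eq_mult_pred assms(1) by fastforce
  obtain c where "c \<in> level n p" "c \<noteq> b" using ex_other_in_level[OF assms(1,2,4)] by blast
  then obtain L where "admissible n L" "b \<in> L" "card L = n ^ p + k * (n - 1)"
    using admissible_grow[OF _ admissible_level assms(4), of c k] assms(1) by (auto simp: card_level)
  then show ?thesis using k assms(3) by auto
qed

lemma ex_word_pairing:
  assumes "n > 0" "admissible n L1" "admissible n L2" "a \<in> L1" "b \<in> L2" "card L1 = card L2"
  shows "\<exists>ps. word_pairing n ps \<and> (a, b) \<in> set ps"
proof -
  have fin: "finite L1" "finite L2" using assms(2,3) admissible_finite by auto
  obtain xs where xs: "set xs = L1 - {a}" "distinct xs"
    using finite_distinct_list[of "L1 - {a}"] fin by auto
  obtain ys where ys: "set ys = L2 - {b}" "distinct ys"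
    using finite_distinct_list[of "L2 - {b}"] fin by auto
  have "length xs = length ys"
    using xs ys fin assms(4-6) by (metis card_Diff_singleton distinct_card)
  then have "map fst ((a, b) # zip xs ys) = a # xs" "map snd ((a, b) # zip xs ys) = b # ys"
    by simp_all
  then have "word_pairing n ((a, b) # zip xs ys)"
    unfolding word_pairing_def using assms(1-5) xs ys by (simp add: insert_absorb)
  then show ?thesis by auto
qed

lemma ex_admissible_equal_card:
  assumes "n \<ge> 2" "a \<in> level n p" "b \<in> level n q" "1 \<le> p" "1 \<le> q"
  shows "\<exists>L1 L2. admissible n L1 \<and> admissible n L2 \<and> a \<in> L1 \<and> b \<in> L2 \<and> card L1 = card L2"
proof (cases "p \<le> q")
  case True
  then obtain L where "admissible n L" "a \<in> L" "card L = n ^ q"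
    using ex_admissible_card_power[OF assms(1,4) True assms(2)] by blast
  then show ?thesis using admissible_level assms(3) card_level by metis
next
  case False
  then obtain L where "admissible n L" "b \<in> L" "card L = n ^ p"
    using ex_admissible_card_power[OF assms(1,5) _ assms(3), of p] by auto
  then show ?thesis using admissible_level assms(2) card_level by metis
qed

text \<open>If \<open>f\<^bsup>p+1\<^esup> x = f\<^bsup>q+1\<^esup> w\<close>, the affine map from the cylinder of \<open>x\<close> of length \<open>p + 1\<close> onto
the cylinder of \<open>w\<close> of length \<open>q + 1\<close> sends \<open>x\<close> to \<open>w\<close>; it extends to an element of \<open>V\<^sub>n\<close>.\<close>
lemma Vn_transitive_on_orb:
  assumes "n \<ge> 2" "x \<in> {0..<1}" "w \<in> orb n x"
  shows "\<exists>g\<in>Vn n. g x = w"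
proof -
  have n: "n > 0" using assms(1) by simp
  obtain p q where w: "w \<in> {0..<1}" and "(fmap n ^^ q) w = (fmap n ^^ p) x"
    using assms(3) by (auto simp: orb_def)
  then have eq: "(fmap n ^^ Suc q) w = (fmap n ^^ Suc p) x" by simp
  define a where "a = digit_word n w (Suc q)"
  define b where "b = digit_word n x (Suc p)"
  have a: "a \<in> level n (Suc q)" "w \<in> phi n a" "is_word n a" "length a = Suc q"
    using digit_word_in_level[OF n w] mem_phi_digit_word[OF n w] by (auto simp: a_def level_def)
  have b: "b \<in> level n (Suc p)" "x \<in> phi n b" "is_word n b" "length b = Suc p"
    using digit_word_in_level[OF n assms(2)] mem_phi_digit_word[OF n assms(2)]
    by (auto simp: b_def level_def)
  obtain ps where ps: "word_pairing n ps" "(a, b) \<in> set ps"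
    using ex_admissible_equal_card[OF assms(1) a(1) b(1)] ex_word_pairing[OF n] by force
  have "pairing_map n ps x = affine_onto n a b x"
    by (rule word_pairing.pairing_map_on_phi[OF ps b(2)])
  also have "\<dots> = word_left n a + (fmap n ^^ Suc p) x / real n ^ Suc q"
    using funpow_fmap_on_phi[OF n b(3,2)] a(4) b(4) by (simp add: affine_onto_def mult.commute)
  also have "\<dots> = w"
    using eq funpow_fmap_on_phi[OF n a(3,2)] a(4) n by simp
  finally show ?thesis using word_pairing.pairing_map_in_Vn[OF ps(1)] by blast
qed

lemma ex_Vn_swap_in_level:
  assumes "n > 0" "d \<in> level n m" "e \<in> level n m"
  defines "\<sigma> \<equiv> \<lambda>u. if u = d then e else if u = e then d else u"
  shows "\<exists>g\<in>Vn n. \<forall>u\<in>level n m. \<forall>y\<in>phi n u. g y = word_left n (\<sigma> u) + (y - word_left n u)"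
proof -
  have \<sigma>\<sigma>: "\<sigma> (\<sigma> u) = u" for u by (simp add: \<sigma>_def)
  have \<sigma>_level: "u \<in> level n m \<Longrightarrow> \<sigma> u \<in> level n m" for u using assms(2,3) by (simp add: \<sigma>_def)
  obtain us where us: "set us = level n m" "distinct us"
    using finite_distinct_list[OF finite_level] by blast
  define ps where "ps = map (\<lambda>u. (\<sigma> u, u)) us"
  have "inj_on \<sigma> (set us)" by (metis inj_onI \<sigma>\<sigma>)
  moreover have "\<sigma> ` level n m = level n m" using \<sigma>_level \<sigma>\<sigma> by (metis image_eqI subsetI subset_antisym image_subsetI)
  ultimately have pairing: "word_pairing n ps"
    unfolding word_pairing_def ps_def using assms(1) us admissible_level
    by (simp add: distinct_map comp_def)
  have "pairing_map n ps y = word_left n (\<sigma> u) + (y - word_left n u)"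
    if u: "u \<in> level n m" and y: "y \<in> phi n u" for u y
  proof -
    have "(\<sigma> u, u) \<in> set ps" using u us by (auto simp: ps_def)
    then have "pairing_map n ps y = affine_onto n (\<sigma> u) u y"
      using word_pairing.pairing_map_on_phi[OF pairing _ y] by blast
    moreover have "length (\<sigma> u) = length u" using \<sigma>_level[OF u] u by (simp add: level_def)
    ultimately show ?thesis using assms(1) by (simp add: affine_onto_def)
  qed
  then show ?thesis using word_pairing.pairing_map_in_Vn[OF pairing] by blast
qed

lemma dist_lt_if_same_cylinder: "x \<in> phi n u \<Longrightarrow> z \<in> phi n u \<Longrightarrow> \<bar>x - z\<bar> < 1 / real n ^ length u"
  by (auto simp: phi_def)

text \<open>Swapping the cylinder of \<open>z\<close> with any other cylinder of the same level fixes \<open>x\<close>.\<close>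
lemma stabilizer_orbit_contains_shifts:
  assumes "n > 0" "dx \<in> level n m" "dz \<in> level n m" "dx \<noteq> dz" "x \<in> phi n dx" "z \<in> phi n dz"
  shows "(\<lambda>e. word_left n e + (z - word_left n dz)) ` (level n m - {dx})
    \<subseteq> {g z |g. g \<in> Vn n \<and> g x = x}"
proof
  fix t assume "t \<in> (\<lambda>e. word_left n e + (z - word_left n dz)) ` (level n m - {dx})"
  then obtain e where e: "e \<in> level n m" "e \<noteq> dx" "t = word_left n e + (z - word_left n dz)"
    by blast
  obtain g where "g \<in> Vn n" and g: "\<forall>u\<in>level n m. \<forall>y\<in>phi n u.
      g y = word_left n (if u = dz then e else if u = e then dz else u) + (y - word_left n u)"
    using ex_Vn_swap_in_level[OF assms(1,3) e(1)] by blast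
  moreover have "g x = x" using g assms(2,4,5) e(2) by auto
  moreover have "g z = t" using g assms(3,6) e(3) by auto
  ultimately show "t \<in> {g z |g. g \<in> Vn n \<and> g x = x}" by blast
qed

text \<open>At a level \<open>m\<close> fine enough to separate \<open>x\<close> from \<open>z\<close> the shifts above give \<open>n\<^sup>m - 1\<close>
distinct points, and \<open>n\<^sup>m - 1\<close> is unbounded in \<open>m\<close>.\<close>
lemma infinite_stabilizer_orbit:
  assumes "n \<ge> 2" "x \<in> {0..<1}" "z \<in> {0..<1}" "x \<noteq> z"
  shows "infinite {g z |g. g \<in> Vn n \<and> g x = x}" (is "infinite ?S")
proof
  assume fin: "finite ?S"
  have n: "n > 0" using assms(1) by simp
  obtain m0 where m0: "(1 / real n) ^ m0 < \<bar>x - z\<bar>"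
    using real_arch_pow_inv[of "\<bar>x - z\<bar>" "1 / real n"] assms(1,4) by auto
  define m where "m = m0 + card ?S + 2"
  have "1 / real n ^ m \<le> 1 / real n ^ m0"
    using assms(1) by (intro divide_left_mono power_increasing) (auto simp: m_def)
  then have small: "1 / real n ^ m < \<bar>x - z\<bar>" using m0 by (simp add: power_one_over)
  define dx where "dx = digit_word n x m"
  define dz where "dz = digit_word n z m"
  have dx: "dx \<in> level n m" "x \<in> phi n dx"
    unfolding dx_def using digit_word_in_level[OF n assms(2)] mem_phi_digit_word[OF n assms(2)] .
  have dz: "dz \<in> level n m" "z \<in> phi n dz"
    unfolding dz_def using digit_word_in_level[OF n assms(3)] mem_phi_digit_word[OF n assms(3)] .
  have "dx \<noteq> dz"
  proof
    assume "dx = dz"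
    then have "\<bar>x - z\<bar> < 1 / real n ^ m"
      using dist_lt_if_same_cylinder[OF dx(2)] dz(2) dx(1) by (simp add: level_def)
    then show False using small by simp
  qed
  then have "card ((\<lambda>e. word_left n e + (z - word_left n dz)) ` (level n m - {dx})) \<le> card ?S"
    by (intro card_mono[OF fin] stabilizer_orbit_contains_shifts[OF n dx(1) dz(1) _ dx(2) dz(2)])
  moreover have "inj_on (\<lambda>e. word_left n e + (z - word_left n dz)) (level n m - {dx})"
    by (rule inj_onI) (use word_left_inj_on_level[OF n] in auto)
  ultimately have "card (level n m - {dx}) \<le> card ?S"
    by (simp add: card_image)
  then have "n ^ m - 1 \<le> card ?S"
    using dx(1) finite_level by (simp add: card_level)
  moreover have "m < n ^ m"
    using less_exp[of m] power_mono[of 2 n m] assms(1) by linarith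
  ultimately show False by (simp add: m_def)
qed

section \<open>Stabiliser-fixed vectors and unitary equivalence\<close>

definition delta :: "real \<Rightarrow> real \<Rightarrow> complex" where
  "delta w = (\<lambda>z. if z = w then 1 else 0)"

lemma Hsp_vanishes: "h \<in> Hsp n x \<Longrightarrow> z \<notin> orb n x \<Longrightarrow> h z = 0"
  by (simp add: Hsp_def)

lemma Hsp_vanishes_outside_unit: "h \<in> Hsp n x \<Longrightarrow> z \<notin> {0..<1} \<Longrightarrow> h z = 0"
  using orb_subset_unit[of n x] Hsp_vanishes by blast

lemma Hsp_summable: "h \<in> Hsp n x \<Longrightarrow> (\<lambda>y. (cmod (h y))\<^sup>2) summable_on orb n x"
  by (simp add: Hsp_def)

lemma Hsp_if_finite_support:
  assumes "finite F" "F \<subseteq> orb n x" "\<And>z. z \<notin> F \<Longrightarrow> h z = 0"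
  shows "h \<in> Hsp n x"
proof -
  have "finite {z \<in> orb n x. (cmod (h z))\<^sup>2 \<noteq> 0}"
    using assms by (intro finite_subset[OF _ assms(1)]) auto
  then show ?thesis
    using assms unfolding Hsp_def by (auto intro: finite_nonzero_values_imp_summable_on)
qed

lemma delta_in_Hsp: "w \<in> orb n x \<Longrightarrow> delta w \<in> Hsp n x"
  by (rule Hsp_if_finite_support[of "{w}"]) (auto simp: delta_def)

lemma ip_self_eq_infsum:
  assumes "k \<in> Hsp n x"
  shows "cmod (ip (orb n x) k k) = infsum (\<lambda>z. (cmod (k z))\<^sup>2) (orb n x)"
proof -
  have "ip (orb n x) k k = infsum (\<lambda>z. of_real ((cmod (k z))\<^sup>2)) (orb n x)"
    unfolding ip_def by (rule infsum_cong) (rule complex_norm_square[symmetric])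
  also have "\<dots> = of_real (infsum (\<lambda>z. (cmod (k z))\<^sup>2) (orb n x))"
    by (rule infsumI[OF has_sum_of_real[OF has_sum_infsum[OF Hsp_summable[OF assms]]]])
  finally show ?thesis
    using infsum_nonneg[of "orb n x" "\<lambda>z. (cmod (k z))\<^sup>2"] by simp
qed

lemma ip_delta_self:
  assumes "w \<in> orb n x"
  shows "ip (orb n x) (delta w) (delta w) = 1"
proof -
  have "ip (orb n x) (delta w) (delta w) = infsum (\<lambda>z. delta w z * cnj (delta w z)) {w}"
    unfolding ip_def by (rule infsum_cong_neutral) (use assms in \<open>auto simp: delta_def\<close>)
  then show ?thesis by (simp add: delta_def)
qed

lemma Hsp_sq_le_ip_self:
  assumes "k \<in> Hsp n x"
  shows "(cmod (k z))\<^sup>2 \<le> cmod (ip (orb n x) k k)"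
proof (cases "z \<in> orb n x")
  case False
  then show ?thesis using Hsp_vanishes[OF assms] by simp
next
  case True
  have "(\<Sum>t\<in>{z}. (cmod (k t))\<^sup>2) \<le> infsum (\<lambda>t. (cmod (k t))\<^sup>2) (orb n x)"
    by (rule finite_sum_le_infsum[OF Hsp_summable[OF assms]]) (use True in auto)
  then show ?thesis using ip_self_eq_infsum[OF assms] by simp
qed

lemma summable_on_constant_on_infinite_imp_zero:
  fixes v :: "'a \<Rightarrow> complex"
  assumes "(\<lambda>z. (cmod (v z))\<^sup>2) summable_on A" "B \<subseteq> A" "infinite B" "\<And>b. b \<in> B \<Longrightarrow> v b = c"
  shows "c = 0"
proof (rule ccontr)
  assume c: "c \<noteq> 0"
  define I where "I = infsum (\<lambda>z. (cmod (v z))\<^sup>2) A"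
  define N where "N = nat \<lceil>I / (cmod c)\<^sup>2\<rceil> + 1"
  obtain F where F: "finite F" "card F = N" "F \<subseteq> B"
    using infinite_arbitrarily_large[OF assms(3)] by blast
  have "(\<Sum>z\<in>F. (cmod (v z))\<^sup>2) = (\<Sum>z\<in>F. (cmod c)\<^sup>2)"
    using F(3) assms(4) by (intro sum.cong) auto
  then have "real N * (cmod c)\<^sup>2 = (\<Sum>z\<in>F. (cmod (v z))\<^sup>2)"
    using F(2) by simp
  also have "\<dots> \<le> I"
    unfolding I_def by (rule finite_sum_le_infsum[OF assms(1) F(1)]) (use F(3) assms(2) in auto)
  also have "I < real N * (cmod c)\<^sup>2"
  proof -
    have "I / (cmod c)\<^sup>2 < real N" unfolding N_def by linarith
    then show ?thesis using c by (simp add: divide_less_eq)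
  qed
  finally show False by simp
qed

lemma rho_scaled_delta:
  assumes "n > 0" "g \<in> Vn n" "w \<in> {0..<1}"
  shows "rho n g (\<lambda>z. c * delta w z) = (\<lambda>z. c * delta (g w) z)"
proof -
  have "rho n g (\<lambda>z. c * delta w z) =
      (\<lambda>z. if z \<in> {0..<1} then c * delta w (inv_into {0..<1} g z) else 0)"
    by (rule rho_apply[OF assms(1,2)]) (use assms(3) in \<open>auto simp: delta_def\<close>)
  also have "\<dots> = (\<lambda>z. c * delta (g w) z)"
  proof
    fix z
    show "(if z \<in> {0..<1} then c * delta w (inv_into {0..<1} g z) else 0) = c * delta (g w) z"
    proof (cases "z \<in> {0..<1}")
      case True
      have "inv_into {0..<1} g z = w \<longleftrightarrow> z = g w"
        using Vn_bij[OF assms(2)] True assms(3)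
        by (metis bij_betw_inv_into_right bij_betw_imp_inj_on inv_into_f_f)
      then show ?thesis using True by (auto simp: delta_def)
    next
      case False
      then show ?thesis using Vn_range[OF assms(2,3)] by (auto simp: delta_def)
    qed
  qed
  finally show ?thesis .
qed

lemma rho_delta: "n > 0 \<Longrightarrow> g \<in> Vn n \<Longrightarrow> w \<in> {0..<1} \<Longrightarrow> rho n g (delta w) = delta (g w)"
  using rho_scaled_delta[of n g w 1] by simp

lemma rho_fixed_imp_invariant:
  assumes "n > 0" "g \<in> Vn n" "rho n g v = v" "v \<in> Hsp n y" "t \<in> {0..<1}"
  shows "v (g t) = v t"
proof -
  have "v (g t) = rho n g v (g t)" using assms(3) by simp
  also have "rho n g v = (\<lambda>z. if z \<in> {0..<1} then v (inv_into {0..<1} g z) else 0)"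
    by (rule rho_apply[OF assms(1,2)]) (rule Hsp_vanishes_outside_unit[OF assms(4)])
  also have "(\<lambda>z. if z \<in> {0..<1} then v (inv_into {0..<1} g z) else 0) (g t)
      = v (inv_into {0..<1} g (g t))"
    using Vn_range[OF assms(2,5)] by simp
  also have "inv_into {0..<1} g (g t) = t"
    using Vn_bij[OF assms(2)] assms(5) by (metis bij_betw_imp_inj_on inv_into_f_f)
  finally show ?thesis .
qed

text \<open>Here \<open>v\<close> may lie in \<open>H\<^sub>y\<close> for any \<open>y\<close>, which is what the proof of (1) needs.\<close>
lemma stabilizer_fixed_vanishes:
  assumes "n \<ge> 2" "x \<in> {0..<1}" "v \<in> Hsp n y"
    and fixed: "\<And>g. g \<in> Vn n \<Longrightarrow> g x = x \<Longrightarrow> rho n g v = v"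
    and "z \<noteq> x"
  shows "v z = 0"
proof (cases "z \<in> orb n y")
  case False then show ?thesis using Hsp_vanishes[OF assms(3)] by blast
next
  case True
  have n: "n > 0" using assms(1) by simp
  have z: "z \<in> {0..<1}" using True orb_subset_unit by blast
  define B where "B = {g z |g. g \<in> Vn n \<and> g x = x}"
  have "infinite B" unfolding B_def using infinite_stabilizer_orbit[OF assms(1,2) z] assms(5) by auto
  moreover have "B \<subseteq> orb n y" unfolding B_def using Vn_mem_orb_iff[OF n _ z] True by blast
  moreover have "\<And>b. b \<in> B \<Longrightarrow> v b = v z"
    unfolding B_def using rho_fixed_imp_invariant[OF n _ _ assms(3) z] fixed by blast
  ultimately show ?thesis
    using summable_on_constant_on_infinite_imp_zero[OF Hsp_summable[OF assms(3)]] by blast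
qed

lemma stabilizer_fixed_eq_scaled_delta:
  assumes "n \<ge> 2" "x \<in> {0..<1}" "v \<in> Hsp n y"
    and "\<And>g. g \<in> Vn n \<Longrightarrow> g x = x \<Longrightarrow> rho n g v = v"
  shows "v = (\<lambda>z. v x * delta x z)"
  using stabilizer_fixed_vanishes[OF assms] by (auto simp: delta_def)

lemma unitarily_equivalent_imp_orb_eq:
  assumes "n \<ge> 2" "x \<in> {0..<1}" "unitarily_equivalent n x y"
  shows "orb n x = orb n y"
proof (rule ccontr)
  assume "orb n x \<noteq> orb n y"
  then have x_notin: "x \<notin> orb n y" using orb_eq_iff_mem[OF assms(2)] by blast
  obtain U where U: "unitary_between n x y U"
    and comm: "\<And>g h. g \<in> Vn n \<Longrightarrow> h \<in> Hsp n x \<Longrightarrow> U (rho n g h) = rho n g (U h)"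
    using assms(3) by (auto simp: unitarily_equivalent_def)
  have dx: "delta x \<in> Hsp n x" using delta_in_Hsp self_in_orb[OF assms(2)] by blast
  have v: "U (delta x) \<in> Hsp n y" using U dx by (auto simp: unitary_between_def)
  have "rho n g (U (delta x)) = U (delta x)" if "g \<in> Vn n" "g x = x" for g
    using comm[OF that(1) dx] rho_delta[OF _ that(1) assms(2)] that(2) assms(1) by simp
  then have "U (delta x) = (\<lambda>z. U (delta x) x * delta x z)"
    by (rule stabilizer_fixed_eq_scaled_delta[OF assms(1,2) v])
  then have "U (delta x) = (\<lambda>z. 0)"
    using Hsp_vanishes[OF v x_notin] by simp
  then have "ip (orb n y) (U (delta x)) (U (delta x)) = 0" by (simp add: ip_def)
  moreover have "ip (orb n y) (U (delta x)) (U (delta x)) = 1"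
    using U dx ip_delta_self[OF self_in_orb[OF assms(2)]] by (simp add: unitary_between_def)
  ultimately show False by simp
qed

lemma orb_eq_imp_unitarily_equivalent:
  assumes "orb n x = orb n y"
  shows "unitarily_equivalent n x y"
proof -
  have "unitary_between n x y id"
    using assms by (simp add: unitary_between_def lin_on_def Hsp_def)
  then show ?thesis unfolding unitarily_equivalent_def by (intro exI[of _ id]) simp
qed

section \<open>Irreducibility\<close>

lemma commuting_op_scalar_on_deltas:
  assumes "n \<ge> 2" "x \<in> {0..<1}" "T (delta x) \<in> Hsp n x"
    and comm: "\<And>g h. g \<in> Vn n \<Longrightarrow> h \<in> Hsp n x \<Longrightarrow> T (rho n g h) = rho n g (T h)"
  shows "\<exists>c. \<forall>w\<in>orb n x. T (delta w) = (\<lambda>z. c * delta w z)"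
proof (intro exI ballI)
  have n: "n > 0" using assms(1) by simp
  have dx: "delta x \<in> Hsp n x" using delta_in_Hsp self_in_orb[OF assms(2)] by blast
  have "rho n g (T (delta x)) = T (delta x)" if "g \<in> Vn n" "g x = x" for g
    using comm[OF that(1) dx] rho_delta[OF n that(1) assms(2)] that(2) by simp
  then have Tx: "T (delta x) = (\<lambda>z. T (delta x) x * delta x z)"
    by (rule stabilizer_fixed_eq_scaled_delta[OF assms(1-3)])
  fix w assume "w \<in> orb n x"
  then obtain g where g: "g \<in> Vn n" "g x = w"
    using Vn_transitive_on_orb[OF assms(1,2)] by blast
  have "T (delta w) = T (rho n g (delta x))"
    using rho_delta[OF n g(1) assms(2)] g(2) by simp
  also have "\<dots> = rho n g (\<lambda>z. T (delta x) x * delta x z)"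
    using comm[OF g(1) dx] Tx by simp
  also have "\<dots> = (\<lambda>z. T (delta x) x * delta w z)"
    using rho_scaled_delta[OF n g(1) assms(2)] g(2) by simp
  finally show "T (delta w) = (\<lambda>z. T (delta x) x * delta w z)" .
qed

lemma lin_on_add: "lin_on H T \<Longrightarrow> h \<in> H \<Longrightarrow> k \<in> H \<Longrightarrow> T (\<lambda>z. h z + k z) = (\<lambda>z. T h z + T k z)"
  by (simp add: lin_on_def)

lemma lin_on_scale: "lin_on H T \<Longrightarrow> h \<in> H \<Longrightarrow> T (\<lambda>z. a * h z) = (\<lambda>z. a * T h z)"
  by (simp add: lin_on_def)

lemma lin_on_scalar_on_finite_support:
  assumes lin: "lin_on (Hsp n x) T" and deltas: "\<And>w. w \<in> orb n x \<Longrightarrow> T (delta w) = (\<lambda>z. c * delta w z)"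
    and "finite F" "F \<subseteq> orb n x"
  shows "T (\<lambda>z. if z \<in> F then h z else 0) = (\<lambda>z. c * (if z \<in> F then h z else 0))"
  using assms(3,4)
proof (induction F rule: finite_induct)
  case empty
  have "(\<lambda>z. 0) \<in> Hsp n x" by (rule Hsp_if_finite_support[of "{}"]) auto
  from lin_on_scale[OF lin this, of 0] show ?case by simp
next
  case (insert w F)
  define A where "A z = (if z \<in> F then h z else 0)" for z
  have w: "w \<in> orb n x" using insert.prems by simp
  have AH: "A \<in> Hsp n x"
    using insert.hyps(1) insert.prems by (intro Hsp_if_finite_support[of F]) (auto simp: A_def)
  have BH: "(\<lambda>z. h w * delta w z) \<in> Hsp n x"
    using w by (intro Hsp_if_finite_support[of "{w}"]) (auto simp: delta_def)
  have "(\<lambda>z. if z \<in> insert w F then h z else 0) = (\<lambda>z. A z + h w * delta w z)"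
    using insert.hyps(2) by (auto simp: A_def delta_def)
  moreover have "T A = (\<lambda>z. c * A z)"
    using insert.IH insert.prems by (simp add: A_def [abs_def])
  moreover have "T (\<lambda>z. h w * delta w z) = (\<lambda>z. h w * (c * delta w z))"
    using lin_on_scale[OF lin delta_in_Hsp[OF w], of "h w"] deltas[OF w] by simp
  ultimately show ?case
    using lin_on_add[OF lin AH BH] insert.hyps(2) by (auto simp: A_def delta_def algebra_simps)
qed

lemma Hsp_tail_small:
  assumes h: "h \<in> Hsp n x" and "\<epsilon> > 0"
  obtains F where "finite F" "F \<subseteq> orb n x" "(\<lambda>z. if z \<in> F then 0 else h z) \<in> Hsp n x"
    "cmod (ip (orb n x) (\<lambda>z. if z \<in> F then 0 else h z) (\<lambda>z. if z \<in> F then 0 else h z)) \<le> \<epsilon>"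
proof -
  let ?q = "\<lambda>z. (cmod (h z))\<^sup>2"
  have q: "?q summable_on orb n x" using Hsp_summable[OF h] .
  obtain F where F: "finite F" "F \<subseteq> orb n x" "dist (sum ?q F) (infsum ?q (orb n x)) \<le> \<epsilon>"
    using infsum_finite_approximation[OF q assms(2)] by blast
  define d where "d z = (if z \<in> F then 0 else h z)" for z
  have "(\<lambda>z. (cmod (d z))\<^sup>2) summable_on orb n x"
    by (rule summable_on_comparison_test[OF q]) (auto simp: d_def)
  then have dH: "d \<in> Hsp n x"
    unfolding Hsp_def using Hsp_vanishes[OF h] by (auto simp: d_def)
  have split: "orb n x = F \<union> (orb n x - F)" using F(2) by blast
  have "infsum ?q (orb n x) = infsum ?q F + infsum ?q (orb n x - F)"
    by (subst split, rule infsum_Un_disjoint)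
      (auto intro: summable_on_subset[OF q F(2)] summable_on_subset[OF q])
  moreover have "infsum (\<lambda>z. (cmod (d z))\<^sup>2) (orb n x) = infsum ?q (orb n x - F)"
    by (rule infsum_cong_neutral) (auto simp: d_def)
  moreover have "infsum ?q F = sum ?q F" using F(1) by simp
  ultimately have "cmod (ip (orb n x) d d) \<le> \<epsilon>"
    using F(3) ip_self_eq_infsum[OF dH] by (simp add: dist_real_def)
  then show ?thesis using that F(1,2) dH unfolding d_def by blast
qed

lemma Hsp_deviation_le:
  assumes "d \<in> Hsp n x" "k \<in> Hsp n x"
    and "cmod (ip (orb n x) k k) \<le> C * cmod (ip (orb n x) d d)"
    and "cmod (ip (orb n x) d d) \<le> \<delta>\<^sup>2" "0 \<le> \<delta>"
  shows "cmod (k z - c * d z) \<le> (sqrt \<bar>C\<bar> + cmod c) * \<delta>"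
proof -
  have "(cmod (d z))\<^sup>2 \<le> \<delta>\<^sup>2"
    using Hsp_sq_le_ip_self[OF assms(1), of z] assms(4) by linarith
  then have d: "cmod (d z) \<le> \<delta>"
    by (rule power2_le_imp_le[OF _ assms(5)])
  have "C * cmod (ip (orb n x) d d) \<le> \<bar>C\<bar> * cmod (ip (orb n x) d d)"
    by (intro mult_right_mono) auto
  also have "\<dots> \<le> \<bar>C\<bar> * \<delta>\<^sup>2"
    using assms(4) by (intro mult_left_mono) auto
  also have "\<dots> = (sqrt \<bar>C\<bar> * \<delta>)\<^sup>2"
    by (simp only: power_mult_distrib real_sqrt_pow2[OF abs_ge_zero])
  finally have "(cmod (k z))\<^sup>2 \<le> (sqrt \<bar>C\<bar> * \<delta>)\<^sup>2"
    using Hsp_sq_le_ip_self[OF assms(2), of z] assms(3) by linarith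
  then have k: "cmod (k z) \<le> sqrt \<bar>C\<bar> * \<delta>"
    by (rule power2_le_imp_le) (use assms(5) in simp)
  have "cmod (k z - c * d z) \<le> cmod (k z) + cmod c * cmod (d z)"
    using norm_triangle_ineq4[of "k z" "c * d z"] by (simp add: norm_mult)
  also have "\<dots> \<le> sqrt \<bar>C\<bar> * \<delta> + cmod c * \<delta>"
    using add_mono[OF k mult_left_mono[OF d norm_ge_zero]] .
  finally show ?thesis by (simp only: distrib_right)
qed

text \<open>Boundedness is what passes from finitely supported vectors to all of \<open>H\<^sub>x\<close>: at each point
the error is controlled by the norm of a small tail.\<close>
lemma bounded_op_scalar_if_scalar_on_deltas:
  assumes T: "bounded_op n x T" and deltas: "\<And>w. w \<in> orb n x \<Longrightarrow> T (delta w) = (\<lambda>z. c * delta w z)"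
    and h: "h \<in> Hsp n x"
  shows "T h = (\<lambda>z. c * h z)"
proof
  have TH: "\<And>h. h \<in> Hsp n x \<Longrightarrow> T h \<in> Hsp n x" and lin: "lin_on (Hsp n x) T"
    using T by (auto simp: bounded_op_def)
  obtain C where C: "\<And>h. h \<in> Hsp n x \<Longrightarrow> cmod (ip (orb n x) (T h) (T h)) \<le> C * cmod (ip (orb n x) h h)"
    using T unfolding bounded_op_def by blast
  define K where "K = sqrt \<bar>C\<bar> + cmod c + 1"
  have K: "K > 0" by (simp add: K_def add_nonneg_pos)
  fix z0
  have "cmod (T h z0 - c * h z0) \<le> 0 + e" if e: "e > 0" for e
  proof -
    have "(e / K)\<^sup>2 > 0" using e K by simp
    then obtain F where F: "finite F" "F \<subseteq> orb n x"
      and tail: "(\<lambda>z. if z \<in> F then 0 else h z) \<in> Hsp n x"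
        "cmod (ip (orb n x) (\<lambda>z. if z \<in> F then 0 else h z) (\<lambda>z. if z \<in> F then 0 else h z))
          \<le> (e / K)\<^sup>2"
      by (rule Hsp_tail_small[OF h])
    define d where "d = (\<lambda>z. if z \<in> F then 0 else h z)"
    have dH: "d \<in> Hsp n x" and small: "cmod (ip (orb n x) d d) \<le> (e / K)\<^sup>2"
      using tail by (simp_all add: d_def)
    define r where "r = (\<lambda>z. if z \<in> F then h z else 0)"
    have rH: "r \<in> Hsp n x" using F by (intro Hsp_if_finite_support[of F]) (auto simp: r_def)
    have "T h = T (\<lambda>z. r z + d z)"
      by (rule arg_cong[where f = T]) (auto simp: r_def d_def)
    also have "\<dots> = (\<lambda>z. T r z + T d z)" by (rule lin_on_add[OF lin rH dH])
    finally have "T h z0 = c * r z0 + T d z0"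
      using lin_on_scalar_on_finite_support[OF lin deltas F] by (simp add: r_def)
    then have "T h z0 - c * h z0 = T d z0 - c * d z0"
      by (simp add: r_def d_def algebra_simps)
    also have "cmod \<dots> \<le> (sqrt \<bar>C\<bar> + cmod c) * (e / K)"
      using Hsp_deviation_le[OF dH TH[OF dH] C[OF dH] small] e K by simp
    also have "\<dots> \<le> K * (e / K)"
      using e K by (intro mult_right_mono) (auto simp: K_def)
    also have "\<dots> = e" using K by simp
    finally show ?thesis by simp
  qed
  then show "T h z0 = c * h z0"
    using field_le_epsilon[of "cmod (T h z0 - c * h z0)" 0] by simp
qed

lemma irreducible_rho:
  assumes "n \<ge> 2" "x \<in> {0..<1}"
  shows "irreducible_rho n x"
  unfolding irreducible_rho_def
proof (intro allI impI)
  fix T assume T: "bounded_op n x T \<and> (\<forall>g\<in>Vn n. \<forall>h\<in>Hsp n x. T (rho n g h) = rho n g (T h))"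
  have "T (delta x) \<in> Hsp n x"
    using T delta_in_Hsp[OF self_in_orb[OF assms(2)]] by (auto simp: bounded_op_def)
  then obtain c where "\<forall>w\<in>orb n x. T (delta w) = (\<lambda>z. c * delta w z)"
    using commuting_op_scalar_on_deltas[OF assms] T by blast
  then show "\<exists>c. \<forall>h\<in>Hsp n x. T h = (\<lambda>z. c * h z)"
    using bounded_op_scalar_if_scalar_on_deltas T by blast
qed

theorem theorem4p11:
  fixes n :: nat and x y :: real
  assumes "n \<ge> 2" and "x \<in> {0..<1}" and "y \<in> {0..<1}"
  shows "(unitarily_equivalent n x y \<longleftrightarrow> orb n x = orb n y) \<and> irreducible_rho n x"
  using unitarily_equivalent_imp_orb_eq[OF assms(1,2)] orb_eq_imp_unitarily_equivalent
    irreducible_rho[OF assms(1,2)] by blast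

end
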